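(* Let $\mathcal C\subseteq 2^{[n]}$ be a degree two code and let $i,j\in[n]$ with $j<i$ in $P(\mathcal C)$. Then $N(j)\subseteq I(i)\cup N(i)$.
   Context: A code is a set $\mathcal C\subseteq 2^{[n]}$, $[n]=\{1,\dots,n\}$. Standing conventions: $\emptyset\in\mathcal C$; every neuron lies in some codeword; no two distinct neurons lie in exactly the same codewords. A pseudo-monomial in $\mathbb F_2[x_1,\dots,x_n]$ is $\prod_{a\in\alpha}x_a\prod_{b\in\beta}(1-x_b)$ with $\alpha\cap\beta=\emptyset$, ordered by divisibility. $J_\mathcal C=\langle\rho_\gamma:\gamma\notin\mathcal C\rangle$ with $\rho_\gamma=\prod_{a\in\gamma}x_a\prod_{b\notin\gamma}(1-x_b)$; $\mathrm{CF}(J_\mathcal C)$ is the set of minimal pseudo-monomials in $J_\mathcal C$. $\mathcal C$ is degree two if every element of $\mathrm{CF}(J_\mathcal C)$ has degree two. $G(\mathcal C)$ is the graph on $[n]$ with edge $ab$ whenever $\mathrm{CF}(J_\mathcal C)$ has no pseudo-monomial whose two variables are $x_a,x_b$; $P(\mathcal C)$ is the partial order on $[n]$ with $a<b$ iff $x_a(1-x_b)\in\mathrm{CF}(J_\mathcal C)$. $N(a)$ is the set of neighbors of $a$ in $G(\mathcal C)$ and $I(a)=\{b: b<a \text{ in } P(\mathcal C)\}$. *)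

theory Defs
  imports "HOL-Library.Poly_Mapping" "HOL-Library.Z2"
begin

text \<open>Polynomials in F_2[x_1,...,x_n] (variables indexed by nat): finitely supported maps
  from monomials (exponent vectors nat =>0 nat) to coefficients in F_2 (type bit).\<close>
type_synonym poly2 = "(nat \<Rightarrow>\<^sub>0 nat) \<Rightarrow>\<^sub>0 bit"

definition var :: "nat \<Rightarrow> poly2" where
  "var a = Poly_Mapping.single (Poly_Mapping.single a 1) 1"

definition pmono :: "nat set \<Rightarrow> nat set \<Rightarrow> poly2" where
  "pmono \<alpha> \<beta> = (\<Prod>a\<in>\<alpha>. var a) * (\<Prod>b\<in>\<beta>. 1 - var b)"

definition is_pmono_pair :: "nat \<Rightarrow> nat set \<Rightarrow> nat set \<Rightarrow> bool" where
  "is_pmono_pair n \<alpha> \<beta> \<longleftrightarrow> \<alpha> \<subseteq> {1..n} \<and> \<beta> \<subseteq> {1..n} \<and> \<alpha> \<inter> \<beta> = {}"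

definition rho :: "nat \<Rightarrow> nat set \<Rightarrow> poly2" where
  "rho n \<gamma> = pmono \<gamma> ({1..n} - \<gamma>)"

definition neural_ideal :: "nat \<Rightarrow> nat set set \<Rightarrow> poly2 set" where
  "neural_ideal n C = {f. \<exists>h. f = (\<Sum>\<gamma>\<in>Pow {1..n} - C. h \<gamma> * rho n \<gamma>)}"

definition CF :: "nat \<Rightarrow> nat set set \<Rightarrow> (nat set \<times> nat set) set" where
  "CF n C = {(\<alpha>, \<beta>). is_pmono_pair n \<alpha> \<beta> \<and> pmono \<alpha> \<beta> \<in> neural_ideal n C \<and>
     (\<forall>\<alpha>' \<beta>'. is_pmono_pair n \<alpha>' \<beta>' \<and> pmono \<alpha>' \<beta>' \<in> neural_ideal n C \<and>
        pmono \<alpha>' \<beta>' dvd pmono \<alpha> \<beta> \<longrightarrow> pmono \<alpha>' \<beta>' = pmono \<alpha> \<beta>)}"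

definition is_code :: "nat \<Rightarrow> nat set set \<Rightarrow> bool" where
  "is_code n C \<longleftrightarrow> C \<subseteq> Pow {1..n} \<and> {} \<in> C \<and>
     (\<forall>i\<in>{1..n}. \<exists>c\<in>C. i \<in> c) \<and>
     (\<forall>a\<in>{1..n}. \<forall>b\<in>{1..n}. a \<noteq> b \<longrightarrow> {c\<in>C. a \<in> c} \<noteq> {c\<in>C. b \<in> c})"

definition degree_two :: "nat \<Rightarrow> nat set set \<Rightarrow> bool" where
  "degree_two n C \<longleftrightarrow> (\<forall>(\<alpha>, \<beta>)\<in>CF n C. card \<alpha> + card \<beta> = 2)"

definition G_edge :: "nat \<Rightarrow> nat set set \<Rightarrow> nat \<Rightarrow> nat \<Rightarrow> bool" where
  "G_edge n C a b \<longleftrightarrow> a \<in> {1..n} \<and> b \<in> {1..n} \<and> a \<noteq> b \<and>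
     \<not> (\<exists>(\<alpha>, \<beta>)\<in>CF n C. \<alpha> \<union> \<beta> = {a, b})"

definition P_less :: "nat \<Rightarrow> nat set set \<Rightarrow> nat \<Rightarrow> nat \<Rightarrow> bool" where
  "P_less n C a b \<longleftrightarrow> ({a}, {b}) \<in> CF n C"

definition Nbhd :: "nat \<Rightarrow> nat set set \<Rightarrow> nat \<Rightarrow> nat set" where
  "Nbhd n C a = {b. G_edge n C a b}"

definition Ibelow :: "nat \<Rightarrow> nat set set \<Rightarrow> nat \<Rightarrow> nat set" where
  "Ibelow n C a = {b. P_less n C b a}"

end

theory Submission
  imports Defs
begin

text \<open>Let k be adjacent to j but not to i in G(C), so CF(J_C) contains a degree-two
  pseudo-monomial in x_i, x_k. Since x_j(1 - x_i) lies in J_C, so does f x_j whenever f x_i does: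
  f x_j = x_j (f x_i) + f x_j (1 - x_i). Hence x_i x_k or x_i (1 - x_k) in J_C would put
  x_j x_k or x_j (1 - x_k) into J_C; as the code is degree two, a minimal pseudo-monomial below it
  involves exactly x_j and x_k, contradicting the adjacency of j and k. Also (1 - x_i)(1 - x_k)
  is not in J_C, because J_C vanishes at the codeword {}. What remains is x_k (1 - x_i), i.e.
  k < i in P(C).\<close>

text \<open>A set x encodes the 0/1-point with support x; a monomial evaluates to 1 there iff all
  its variables lie in x.\<close>
definition eval_monomial :: "nat set \<Rightarrow> (nat \<Rightarrow>\<^sub>0 nat) \<Rightarrow> bit" where
  "eval_monomial x m = (if Poly_Mapping.keys m \<subseteq> x then 1 else 0)"

definition eval01 :: "nat set \<Rightarrow> poly2 \<Rightarrow> bit" where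
  "eval01 x f = (\<Sum>m\<in>Poly_Mapping.keys f. Poly_Mapping.lookup f m * eval_monomial x m)"

lemma keys_add_nat:
  "Poly_Mapping.keys ((m1 :: 'a \<Rightarrow>\<^sub>0 nat) + m2) = Poly_Mapping.keys m1 \<union> Poly_Mapping.keys m2"
  by (auto simp: in_keys_iff lookup_add)

lemma eval_monomial_add: "eval_monomial x (m1 + m2) = eval_monomial x m1 * eval_monomial x m2"
  by (auto simp: eval_monomial_def keys_add_nat)

lemma eval01_add: "eval01 x (f + g) = eval01 x f + eval01 x g"
  unfolding eval01_def
  by (rule setsum_keys_plus_distrib) (simp_all only: mult_zero_left distrib_right)

lemma eval01_zero: "eval01 x 0 = 0"
  by (simp add: eval01_def)

lemma eval01_sum: "eval01 x (sum F A) = (\<Sum>a\<in>A. eval01 x (F a))"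
  by (induction A rule: infinite_finite_induct) (auto simp: eval01_zero eval01_add)

lemma eval01_single: "eval01 x (Poly_Mapping.single m c) = c * eval_monomial x m"
  by (cases "c = 0") (auto simp: eval01_def)

lemma poly_mapping_sum_single:
  "f = (\<Sum>m\<in>Poly_Mapping.keys f. Poly_Mapping.single m (Poly_Mapping.lookup f m))"
  by (rule poly_mapping_eqI)
     (auto simp: lookup_sum lookup_single when_def in_keys_iff sum.delta' split: if_splits)

lemma eval01_mult: "eval01 x (f * g) = eval01 x f * eval01 x g"
proof -
  have "f * g = (\<Sum>m\<in>Poly_Mapping.keys f. Poly_Mapping.single m (Poly_Mapping.lookup f m)) *
                (\<Sum>m\<in>Poly_Mapping.keys g. Poly_Mapping.single m (Poly_Mapping.lookup g m))"
    using poly_mapping_sum_single[of f] poly_mapping_sum_single[of g] by simp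
  also have "\<dots> = (\<Sum>m\<in>Poly_Mapping.keys f. \<Sum>m'\<in>Poly_Mapping.keys g.
      Poly_Mapping.single (m + m') (Poly_Mapping.lookup f m * Poly_Mapping.lookup g m'))"
    by (simp add: sum_product mult_single)
  finally have "eval01 x (f * g) = (\<Sum>m\<in>Poly_Mapping.keys f. \<Sum>m'\<in>Poly_Mapping.keys g.
      Poly_Mapping.lookup f m * Poly_Mapping.lookup g m' * eval_monomial x (m + m'))"
    by (simp add: eval01_sum eval01_single)
  also have "\<dots> = (\<Sum>m\<in>Poly_Mapping.keys f. \<Sum>m'\<in>Poly_Mapping.keys g.
      (Poly_Mapping.lookup f m * eval_monomial x m) * (Poly_Mapping.lookup g m' * eval_monomial x m'))"
    by (intro sum.cong refl) (simp only: eval_monomial_add mult_ac)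
  also have "\<dots> = eval01 x f * eval01 x g"
    by (simp only: eval01_def sum_product)
  finally show ?thesis .
qed

lemma eval01_one: "eval01 x 1 = 1"
  using eval01_single[of x 0 1] by (simp add: eval_monomial_def)

lemma eval01_diff: "eval01 x (f - g) = eval01 x f - eval01 x g"
  using eval01_add[of x "f - g" g] by (metis add_diff_cancel_right diff_add_cancel)

lemma eval01_prod: "eval01 x (prod F A) = (\<Prod>a\<in>A. eval01 x (F a))"
  by (induction A rule: infinite_finite_induct) (auto simp: eval01_one eval01_mult)

lemma eval01_var: "eval01 x (var a) = (if a \<in> x then 1 else 0)"
  by (simp add: var_def eval01_single eval_monomial_def)

lemma prod_bit_indicator:
  "finite A \<Longrightarrow> (\<Prod>a\<in>A. if P a then 1 else (0 :: bit)) = (if \<forall>a\<in>A. P a then 1 else 0)"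
  by (induction A rule: finite_induct) auto

lemma eval01_pmono:
  assumes "finite \<alpha>" "finite \<beta>"
  shows "eval01 x (pmono \<alpha> \<beta>) = (if \<alpha> \<subseteq> x \<and> \<beta> \<inter> x = {} then 1 else 0)"
proof -
  have "eval01 x (pmono \<alpha> \<beta>) =
      (\<Prod>a\<in>\<alpha>. if a \<in> x then 1 else 0) * (\<Prod>b\<in>\<beta>. if b \<notin> x then 1 else 0)"
    unfolding pmono_def eval01_mult eval01_prod eval01_diff eval01_one eval01_var
    by (intro arg_cong2[where f = "(*)"] prod.cong) auto
  then show ?thesis
    using assms by (simp add: prod_bit_indicator) blast
qed

lemma pmono_dvd_imp_subset:
  assumes "finite \<alpha>" "finite \<beta>" "\<alpha> \<inter> \<beta> = {}" "finite \<alpha>'" "finite \<beta>'"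
    and "pmono \<alpha>' \<beta>' dvd pmono \<alpha> \<beta>"
  shows "\<alpha>' \<subseteq> \<alpha>" "\<beta>' \<subseteq> \<beta>"
proof -
  obtain h where h: "pmono \<alpha> \<beta> = pmono \<alpha>' \<beta>' * h"
    using assms(6) by (auto simp: dvd_def)
  have divisor_at: "\<alpha>' \<subseteq> x \<and> \<beta>' \<inter> x = {}" if "\<alpha> \<subseteq> x" "\<beta> \<inter> x = {}" for x
  proof -
    have "eval01 x (pmono \<alpha> \<beta>) = 1"
      using that assms by (simp add: eval01_pmono)
    then have "eval01 x (pmono \<alpha>' \<beta>') \<noteq> 0"
      by (simp add: h eval01_mult)
    then show ?thesis
      using assms by (simp add: eval01_pmono split: if_splits)
  qed
  show "\<alpha>' \<subseteq> \<alpha>"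
    using divisor_at[of \<alpha>] assms(3) by blast
  show "\<beta>' \<subseteq> \<beta>"
  proof
    fix b assume "b \<in> \<beta>'"
    then show "b \<in> \<beta>"
      using divisor_at[of "insert b \<alpha>"] assms(3) by blast
  qed
qed

lemma neural_ideal_add:
  assumes "f \<in> neural_ideal n C" "g \<in> neural_ideal n C"
  shows "f + g \<in> neural_ideal n C"
proof -
  obtain h1 h2 where "f = (\<Sum>\<gamma>\<in>Pow {1..n} - C. h1 \<gamma> * rho n \<gamma>)"
    and "g = (\<Sum>\<gamma>\<in>Pow {1..n} - C. h2 \<gamma> * rho n \<gamma>)"
    using assms by (auto simp: neural_ideal_def)
  then have "f + g = (\<Sum>\<gamma>\<in>Pow {1..n} - C. (h1 \<gamma> + h2 \<gamma>) * rho n \<gamma>)"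
    by (simp add: distrib_right sum.distrib)
  then show ?thesis
    by (auto simp: neural_ideal_def)
qed

lemma neural_ideal_mult_left:
  assumes "f \<in> neural_ideal n C"
  shows "p * f \<in> neural_ideal n C"
proof -
  obtain h where "f = (\<Sum>\<gamma>\<in>Pow {1..n} - C. h \<gamma> * rho n \<gamma>)"
    using assms by (auto simp: neural_ideal_def)
  then have "p * f = (\<Sum>\<gamma>\<in>Pow {1..n} - C. (p * h \<gamma>) * rho n \<gamma>)"
    by (simp add: sum_distrib_left mult.assoc)
  then show ?thesis
    by (auto simp: neural_ideal_def)
qed

lemma neural_ideal_vanishes_on_code:
  assumes "c \<in> C" "c \<subseteq> {1..n}" "f \<in> neural_ideal n C"
  shows "eval01 c f = 0"
proof -
  obtain h where f: "f = (\<Sum>\<gamma>\<in>Pow {1..n} - C. h \<gamma> * rho n \<gamma>)"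
    using assms(3) by (auto simp: neural_ideal_def)
  have "eval01 c (rho n \<gamma>) = 0" if "\<gamma> \<in> Pow {1..n} - C" for \<gamma>
  proof -
    have "\<gamma> \<noteq> c" "finite \<gamma>"
      using that assms(1) finite_subset by auto
    then show ?thesis
      using that assms(2) by (auto simp: rho_def eval01_pmono)
  qed
  then show ?thesis
    by (simp add: f eval01_sum eval01_mult)
qed

lemma neural_ideal_replace_var:
  assumes "pmono {j} {i} \<in> neural_ideal n C" "f * var i \<in> neural_ideal n C"
  shows "f * var j \<in> neural_ideal n C"
proof -
  have "f * var j = var j * (f * var i) + f * pmono {j} {i}"
    by (simp add: pmono_def algebra_simps)
  then show ?thesis
    using assms by (simp add: neural_ideal_add neural_ideal_mult_left)
qed

lemma ex_CF_subset:
  assumes "is_pmono_pair n \<alpha> \<beta>" "pmono \<alpha> \<beta> \<in> neural_ideal n C"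
  shows "\<exists>\<alpha>' \<beta>'. (\<alpha>', \<beta>') \<in> CF n C \<and> \<alpha>' \<subseteq> \<alpha> \<and> \<beta>' \<subseteq> \<beta>"
  using assms
proof (induction "card \<alpha> + card \<beta>" arbitrary: \<alpha> \<beta> rule: less_induct)
  case less
  show ?case
  proof (cases "(\<alpha>, \<beta>) \<in> CF n C")
    case False
    then obtain \<alpha>' \<beta>' where \<alpha>'\<beta>': "is_pmono_pair n \<alpha>' \<beta>'" "pmono \<alpha>' \<beta>' \<in> neural_ideal n C"
      "pmono \<alpha>' \<beta>' dvd pmono \<alpha> \<beta>" "pmono \<alpha>' \<beta>' \<noteq> pmono \<alpha> \<beta>"
      using less.prems by (auto simp: CF_def)
    have finite: "finite \<alpha>" "finite \<beta>" "finite \<alpha>'" "finite \<beta>'"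
      using less.prems(1) \<alpha>'\<beta>'(1) by (auto simp: is_pmono_pair_def intro: finite_subset)
    have sub: "\<alpha>' \<subseteq> \<alpha>" "\<beta>' \<subseteq> \<beta>"
      using pmono_dvd_imp_subset[OF _ _ _ _ _ \<alpha>'\<beta>'(3)] finite less.prems(1)
      by (auto simp: is_pmono_pair_def)
    with \<alpha>'\<beta>'(4) have "\<alpha>' \<subset> \<alpha> \<or> \<beta>' \<subset> \<beta>"
      by blast
    then have "card \<alpha>' < card \<alpha> \<or> card \<beta>' < card \<beta>"
      using finite by (auto intro: psubset_card_mono)
    moreover have "card \<alpha>' \<le> card \<alpha>" "card \<beta>' \<le> card \<beta>"
      using sub finite by (simp_all add: card_mono)
    ultimately have "card \<alpha>' + card \<beta>' < card \<alpha> + card \<beta>"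
      by linarith
    then show ?thesis
      using less.hyps[OF _ \<alpha>'\<beta>'(1,2)] sub by blast
  qed blast
qed

lemma not_G_edge_if_pmono_in_neural_ideal:
  assumes "degree_two n C" "\<alpha> \<union> \<beta> \<subseteq> {a, b}" "\<alpha> \<inter> \<beta> = {}"
    and "pmono \<alpha> \<beta> \<in> neural_ideal n C"
  shows "\<not> G_edge n C a b"
proof
  assume edge: "G_edge n C a b"
  then have "is_pmono_pair n \<alpha> \<beta>"
    using assms(2,3) by (auto simp: is_pmono_pair_def G_edge_def)
  then obtain \<alpha>' \<beta>' where CF: "(\<alpha>', \<beta>') \<in> CF n C" and "\<alpha>' \<subseteq> \<alpha>" "\<beta>' \<subseteq> \<beta>"
    using ex_CF_subset assms(4) by blast
  then have sub: "\<alpha>' \<union> \<beta>' \<subseteq> {a, b}"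
    using assms(2) by blast
  have "card \<alpha>' + card \<beta>' = 2" "\<alpha>' \<inter> \<beta>' = {}"
    using CF assms(1) by (auto simp: degree_two_def CF_def is_pmono_pair_def)
  then have "card (\<alpha>' \<union> \<beta>') = card {a, b}"
    using sub edge finite_subset[OF sub]
    by (simp add: card_Un_disjoint G_edge_def)
  then have "\<alpha>' \<union> \<beta>' = {a, b}"
    using sub by (simp add: card_subset_eq)
  then show False
    using edge CF by (auto simp: G_edge_def)
qed

lemma P_less_imp_not_G_edge:
  assumes "P_less n C a b"
  shows "\<not> G_edge n C a b"
proof -
  have "\<exists>(\<alpha>, \<beta>)\<in>CF n C. \<alpha> \<union> \<beta> = {a, b}"
    using assms by (intro bexI[of _ "({a}, {b})"]) (auto simp: P_less_def)
  then show ?thesis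
    by (simp add: G_edge_def)
qed

lemma disjoint_Un_doubleton_cases:
  assumes "\<alpha> \<union> \<beta> = {i, k}" "\<alpha> \<inter> \<beta> = {}"
  obtains "\<alpha> = {i, k}" "\<beta> = {}" | "\<alpha> = {i}" "\<beta> = {k}" | "\<alpha> = {k}" "\<beta> = {i}"
    | "\<alpha> = {}" "\<beta> = {i, k}"
proof -
  have "\<alpha> \<in> Pow {i, k}" "\<beta> = {i, k} - \<alpha>"
    using assms by blast+
  then show ?thesis
    using that by (auto simp: Pow_insert)
qed

theorem lemma2p3:
  fixes n :: nat and C :: "nat set set" and i j :: nat
  assumes "is_code n C"
    and "degree_two n C"
    and "i \<in> {1..n}" and "j \<in> {1..n}"
    and "P_less n C j i"
  shows "Nbhd n C j \<subseteq> Ibelow n C i \<union> Nbhd n C i"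
proof
  fix k assume "k \<in> Nbhd n C j"
  then have jk: "G_edge n C j k" and k: "k \<in> {1..n}" "k \<noteq> j" "k \<noteq> i"
    using P_less_imp_not_G_edge[OF assms(5)] by (auto simp: Nbhd_def G_edge_def)
  have replace: "f * var j \<in> neural_ideal n C" if "f * var i \<in> neural_ideal n C" for f
    using assms(5) that by (auto simp: P_less_def CF_def intro: neural_ideal_replace_var)
  have not_J: "pmono \<alpha> \<beta> \<notin> neural_ideal n C" if "\<alpha> \<union> \<beta> = {j, k}" "\<alpha> \<inter> \<beta> = {}" for \<alpha> \<beta>
    using not_G_edge_if_pmono_in_neural_ideal[OF assms(2)] that jk by blast
  show "k \<in> Ibelow n C i \<union> Nbhd n C i"
  proof (cases "G_edge n C i k")
    case False
    then obtain \<alpha> \<beta> where CF: "(\<alpha>, \<beta>) \<in> CF n C" "\<alpha> \<union> \<beta> = {i, k}"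
      using assms(3) k by (auto simp: G_edge_def)
    then have J: "pmono \<alpha> \<beta> \<in> neural_ideal n C" and "\<alpha> \<inter> \<beta> = {}"
      by (auto simp: CF_def is_pmono_pair_def)
    from CF(2) this(2) show ?thesis
    proof (cases rule: disjoint_Un_doubleton_cases)
      case 1
      then show ?thesis
        using J not_J[of "{j, k}" "{}"] replace[of "var k"] k by (auto simp: pmono_def mult.commute)
    next
      case 2
      then show ?thesis
        using J not_J[of "{j}" "{k}"] replace[of "1 - var k"] k by (auto simp: pmono_def mult.commute)
    next
      case 3
      then show ?thesis
        using CF(1) by (simp add: Ibelow_def P_less_def)
    next
      case 4
      then show ?thesis
        using J neural_ideal_vanishes_on_code[of "{}" C n "pmono \<alpha> \<beta>"] assms(1)
        by (simp add: is_code_def eval01_pmono)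
    qed
  qed (simp add: Nbhd_def)
qed

end
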